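(* Let $X$ be a random variable taking values in a metric space $(\mathcal{X}, d)$ and $Y \in [0,1]$ a target outcome. Let $L > 0$, $\alpha \ge 0$, and let $\mathcal{F}^{\text{Lip}(L,d)}$ be the set of functions $f : \mathcal{X} \to [0,1]$ satisfying $|f(x) - f(x')| \le L\, d(x, x')$ for all $x, x' \in \mathcal{X}$. Let $\{S_k\}_{k \in K}$, $K \subseteq \mathbb{N}$, be a partition of $\mathcal{X}$ in which each $S_k$ has diameter at most $4\alpha / L$ with respect to $d$ (and $\mathbb{P}(X \in S_k) > 0$). Then $\{S_k\}_{k \in K}$ is an $\alpha$-multicalibrated partition with respect to $\mathcal{F}^{\text{Lip}(L,d)}$ and $Y$.
   Context: A set $S \subseteq \mathcal{X}$ is $\alpha$-indistinguishable with respect to a function class $\mathcal{F}$ and $Y$ if $|\mathrm{Cov}(f(X), Y \mid X \in S)| \le \alpha$ for all $f \in \mathcal{F}$. Sets $\{S_k\}$ form an $\alpha$-multicalibrated partition with respect to $\mathcal{F}$ and $Y$ if they partition $\mathcal{X}$ and each $S_k$ is $\alpha$-indistinguishable with respect to $\mathcal{F}$ and $Y$. *)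

theory Defs
  imports "HOL-Probability.Probability"
begin

definition cond_expect_event :: "'b measure \<Rightarrow> 'b set \<Rightarrow> ('b \<Rightarrow> real) \<Rightarrow> real" where
  "cond_expect_event M A Z = (\<integral>\<omega>. indicator A \<omega> * Z \<omega> \<partial>M) / measure M A"

definition cond_cov :: "'b measure \<Rightarrow> 'b set \<Rightarrow> ('b \<Rightarrow> real) \<Rightarrow> ('b \<Rightarrow> real) \<Rightarrow> real" where
  "cond_cov M A U V =
     cond_expect_event M A (\<lambda>\<omega>. U \<omega> * V \<omega>) - cond_expect_event M A U * cond_expect_event M A V"

definition indistinguishable ::
  "'b measure \<Rightarrow> ('b \<Rightarrow> 'a) \<Rightarrow> ('b \<Rightarrow> real) \<Rightarrow> ('a \<Rightarrow> real) set \<Rightarrow> real \<Rightarrow> 'a set \<Rightarrow> bool" where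
  "indistinguishable M X Y F \<alpha> S \<longleftrightarrow>
     (\<forall>f\<in>F. \<bar>cond_cov M (X -` S \<inter> space M) (\<lambda>\<omega>. f (X \<omega>)) Y\<bar> \<le> \<alpha>)"

definition multicalibrated_partition ::
  "'b measure \<Rightarrow> ('b \<Rightarrow> 'a) \<Rightarrow> ('b \<Rightarrow> real) \<Rightarrow> ('a \<Rightarrow> real) set \<Rightarrow> real \<Rightarrow> nat set \<Rightarrow> (nat \<Rightarrow> 'a set) \<Rightarrow> bool" where
  "multicalibrated_partition M X Y F \<alpha> K S \<longleftrightarrow>
     (\<forall>i\<in>K. \<forall>j\<in>K. i \<noteq> j \<longrightarrow> S i \<inter> S j = {}) \<and>
     (\<Union>k\<in>K. S k) = UNIV \<and>
     (\<forall>k\<in>K. indistinguishable M X Y F \<alpha> (S k))"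

definition lip_class :: "real \<Rightarrow> ('a::metric_space \<Rightarrow> real) set" where
  "lip_class L = {f. (\<forall>x. 0 \<le> f x \<and> f x \<le> 1) \<and> (\<forall>x x'. \<bar>f x - f x'\<bar> \<le> L * dist x x')}"

end

theory Submission
  imports Defs
begin

text \<open>
  Conditioning on an event A of positive probability is integration against the probability
  measure uniform_measure M A, so it suffices to bound an ordinary covariance.
  If U stays within r of some constant c and V takes values in [0,1] with mean m, then
  Cov(U, V) = E[(U - c)(V - m)], hence |Cov(U, V)| \<le> r E|V - m| \<le> r \<cdot> 2m(1 - m) \<le> r/2.
  An L-Lipschitz function varies by at most L \<cdot> 4\<alpha>/L = 4\<alpha> on a cell of the partition,
  so it stays within r = 2\<alpha> of the midpoint of its range there.
\<close>

lemma (in prob_space) mean_abs_deviation_le_half: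
  fixes V :: "'a \<Rightarrow> real"
  assumes V_meas: "V \<in> borel_measurable M" and V01: "AE \<omega> in M. 0 \<le> V \<omega> \<and> V \<omega> \<le> 1"
  shows "expectation (\<lambda>\<omega>. \<bar>V \<omega> - expectation V\<bar>) \<le> 1 / 2"
proof -
  define m where "m = expectation V"
  have int_V: "integrable M V"
    using V01 V_meas by (intro integrable_const_bound[where B = 1]) auto
  have m01: "0 \<le> m" "m \<le> 1"
    unfolding m_def using V01 int_V
    by (auto intro!: integral_nonneg_AE integral_le_const)
  have dev_le: "\<bar>v - m\<bar> \<le> v * (1 - m) + m * (1 - v)" if "0 \<le> v" "v \<le> 1" for v
    using that m01 mult_left_mono[of m 1 v] mult_right_mono[of v 1 m]
    by (cases "v \<le> m") (auto simp: algebra_simps)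
  have "AE \<omega> in M. \<bar>V \<omega> - m\<bar> \<le> V \<omega> * (1 - m) + m * (1 - V \<omega>)"
    using V01 by (rule eventually_mono) (simp add: dev_le)
  then have "expectation (\<lambda>\<omega>. \<bar>V \<omega> - m\<bar>) \<le> expectation (\<lambda>\<omega>. V \<omega> * (1 - m) + m * (1 - V \<omega>))"
    using int_V by (intro integral_mono_AE) auto
  also have "\<dots> = 2 * m * (1 - m)"
    using int_V by (simp add: m_def algebra_simps prob_space)
  also have "\<dots> \<le> 1 / 2"
    using zero_le_power2[of "m - 1/2"] by (simp add: power2_eq_square algebra_simps)
  finally show ?thesis unfolding m_def .
qed

lemma (in prob_space) abs_covariance_le_half_radius:
  fixes U V :: "'a \<Rightarrow> real"
  assumes U_meas: "U \<in> borel_measurable M" and V_meas: "V \<in> borel_measurable M"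
    and U_near: "AE \<omega> in M. \<bar>U \<omega> - c\<bar> \<le> r"
    and V01: "AE \<omega> in M. 0 \<le> V \<omega> \<and> V \<omega> \<le> 1"
  shows "\<bar>expectation (\<lambda>\<omega>. U \<omega> * V \<omega>) - expectation U * expectation V\<bar> \<le> r / 2"
proof -
  define m where "m = expectation V"
  have "AE \<omega> in M. 0 \<le> r"
    using U_near by (rule eventually_mono) (use abs_ge_zero order_trans in blast)
  then have r_nonneg: "0 \<le> r" by simp
  have U_bound: "AE \<omega> in M. \<bar>U \<omega>\<bar> \<le> \<bar>c\<bar> + r"
    using U_near by (rule eventually_mono) linarith
  have int_U: "integrable M U"
    using U_bound U_meas by (intro integrable_const_bound[where B = "\<bar>c\<bar> + r"]) auto
  have int_V: "integrable M V"
    using V01 V_meas by (intro integrable_const_bound[where B = 1]) auto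
  have int_UV: "integrable M (\<lambda>\<omega>. U \<omega> * V \<omega>)"
  proof (rule integrable_const_bound)
    show "AE \<omega> in M. norm (U \<omega> * V \<omega>) \<le> (\<bar>c\<bar> + r) * 1"
      using U_bound V01
    proof eventually_elim
      case (elim \<omega>)
      then have "\<bar>U \<omega>\<bar> * \<bar>V \<omega>\<bar> \<le> (\<bar>c\<bar> + r) * 1"
        by (intro mult_mono) auto
      then show ?case by (simp add: abs_mult)
    qed
  qed (use U_meas V_meas in measurable)
  have "expectation (\<lambda>\<omega>. U \<omega> * V \<omega>) - expectation U * expectation V
      = expectation (\<lambda>\<omega>. (U \<omega> - c) * (V \<omega> - m))"
  proof -
    have "(\<lambda>\<omega>. (U \<omega> - c) * (V \<omega> - m))
        = (\<lambda>\<omega>. (U \<omega> * V \<omega> - m * U \<omega>) - (c * V \<omega> - c * m))"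
      by (simp add: algebra_simps)
    then have "expectation (\<lambda>\<omega>. (U \<omega> - c) * (V \<omega> - m))
        = (expectation (\<lambda>\<omega>. U \<omega> * V \<omega>) - m * expectation U) - (c * expectation V - c * m)"
      using int_U int_V int_UV by (simp add: prob_space)
    then show ?thesis by (simp add: m_def algebra_simps)
  qed
  also have "\<bar>\<dots>\<bar> \<le> expectation (\<lambda>\<omega>. \<bar>(U \<omega> - c) * (V \<omega> - m)\<bar>)"
    by (rule integral_abs_bound)
  also have "\<dots> \<le> expectation (\<lambda>\<omega>. r * \<bar>V \<omega> - m\<bar>)"
  proof (rule integral_mono_AE')
    show "integrable M (\<lambda>\<omega>. r * \<bar>V \<omega> - m\<bar>)"
      using int_V by simp
    show "AE \<omega> in M. \<bar>(U \<omega> - c) * (V \<omega> - m)\<bar> \<le> r * \<bar>V \<omega> - m\<bar>"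
      using U_near by (rule eventually_mono) (simp add: abs_mult mult_right_mono)
  qed (simp add: r_nonneg)
  also have "\<dots> \<le> r / 2"
    using mult_left_mono[OF mean_abs_deviation_le_half[OF V_meas V01] r_nonneg]
    by (simp add: m_def)
  finally show ?thesis .
qed

lemma cond_expect_event_eq_integral_uniform_measure:
  fixes Z :: "'a \<Rightarrow> real"
  assumes "finite_measure M" and A_pos: "measure M A > 0" and Z_meas: "Z \<in> borel_measurable M"
  shows "cond_expect_event M A Z = (\<integral>\<omega>. Z \<omega> \<partial>uniform_measure M A)"
proof -
  interpret finite_measure M by fact
  have A: "A \<in> sets M"
    using A_pos measure_notin_sets by force
  have "uniform_measure M A = density M (\<lambda>\<omega>. ennreal (indicator A \<omega> / measure M A))"
    unfolding uniform_measure_def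
    using A_pos divide_ennreal[of 1 "measure M A"]
    by (auto simp: emeasure_eq_measure intro!: arg_cong[where f = "density M"] split: split_indicator)
  then show ?thesis
    unfolding cond_expect_event_def using A Z_meas
    by (simp add: integral_density)
qed

lemma abs_cond_cov_le_half_radius:
  fixes U V :: "'a \<Rightarrow> real"
  assumes "finite_measure M" and A_pos: "measure M A > 0"
    and U_meas: "U \<in> borel_measurable M" and V_meas: "V \<in> borel_measurable M"
    and U_near: "\<forall>\<omega>\<in>A. \<bar>U \<omega> - c\<bar> \<le> r" and V01: "\<forall>\<omega>\<in>A. 0 \<le> V \<omega> \<and> V \<omega> \<le> 1"
  shows "\<bar>cond_cov M A U V\<bar> \<le> r / 2"
proof -
  interpret finite_measure M by fact
  have A: "A \<in> sets M"
    using A_pos measure_notin_sets by force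
  interpret N: prob_space "uniform_measure M A"
    using A_pos by (intro prob_space_uniform_measure) (auto simp: emeasure_eq_measure)
  have "cond_cov M A U V
      = N.expectation (\<lambda>\<omega>. U \<omega> * V \<omega>) - N.expectation U * N.expectation V"
    unfolding cond_cov_def using U_meas V_meas
    by (simp add: cond_expect_event_eq_integral_uniform_measure[OF \<open>finite_measure M\<close> A_pos])
  also have "\<bar>\<dots>\<bar> \<le> r / 2"
  proof (rule N.abs_covariance_le_half_radius)
    show "AE \<omega> in uniform_measure M A. \<bar>U \<omega> - c\<bar> \<le> r"
      using A U_near by (intro AE_uniform_measureI AE_I2) auto
    show "AE \<omega> in uniform_measure M A. 0 \<le> V \<omega> \<and> V \<omega> \<le> 1"
      using A V01 by (intro AE_uniform_measureI AE_I2) auto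
  qed (use U_meas V_meas in simp_all)
  finally show ?thesis .
qed

lemma ex_center_within_half_spread:
  fixes B :: "real set"
  assumes "B \<noteq> {}" and spread: "\<forall>y\<in>B. \<forall>y'\<in>B. y - y' \<le> d"
  shows "\<exists>c. \<forall>y\<in>B. \<bar>y - c\<bar> \<le> d / 2"
proof -
  obtain y0 where "y0 \<in> B"
    using \<open>B \<noteq> {}\<close> by blast
  then have bdd: "bdd_above B" "bdd_below B"
    using spread by (force intro: bdd_aboveI[of _ "y0 + d"], force intro: bdd_belowI[of _ "y0 - d"])
  have "Sup B \<le> y' + d" if "y' \<in> B" for y'
    using \<open>B \<noteq> {}\<close> spread that by (intro cSup_least) force+
  then have "Sup B - d \<le> Inf B"
    using \<open>B \<noteq> {}\<close> by (intro cInf_greatest) force+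
  moreover have "Inf B \<le> y" "y \<le> Sup B" if "y \<in> B" for y
    using bdd that by (auto intro: cInf_lower cSup_upper)
  ultimately have "\<forall>y\<in>B. \<bar>y - (Inf B + Sup B) / 2\<bar> \<le> d / 2"
    by (force simp: abs_le_iff field_simps)
  then show ?thesis ..
qed

lemma lip_class_borel_measurable:
  assumes "0 \<le> L" and "f \<in> lip_class L"
  shows "f \<in> borel_measurable borel"
proof (rule borel_measurable_continuous_onI)
  have "L-lipschitz_on UNIV f"
    using assms by (intro lipschitz_onI) (auto simp: lip_class_def dist_real_def)
  then show "continuous_on UNIV f"
    by (rule lipschitz_on_continuous_on)
qed

lemma lip_class_near_center:
  assumes "L > 0" and f: "f \<in> lip_class L" and "T \<noteq> {}"
    and diam: "\<forall>x\<in>T. \<forall>x'\<in>T. dist x x' \<le> D / L"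
  shows "\<exists>c. \<forall>x\<in>T. \<bar>f x - c\<bar> \<le> D / 2"
proof -
  have "f x - f x' \<le> D" if "x \<in> T" "x' \<in> T" for x x'
  proof -
    have "L * dist x x' \<le> D"
      using diam that \<open>L > 0\<close> by (simp add: field_simps)
    moreover have "\<bar>f x - f x'\<bar> \<le> L * dist x x'"
      using f by (simp add: lip_class_def)
    ultimately show ?thesis
      by linarith
  qed
  then have "\<forall>y\<in>f ` T. \<forall>y'\<in>f ` T. y - y' \<le> D"
    by blast
  then obtain c where "\<forall>y\<in>f ` T. \<bar>y - c\<bar> \<le> D / 2"
    using ex_center_within_half_spread[of "f ` T" D] \<open>T \<noteq> {}\<close> by blast
  then show ?thesis
    by auto
qed

theorem corollary5:
  fixes M :: "'b measure" and X :: "'b \<Rightarrow> 'a::metric_space" and Y :: "'b \<Rightarrow> real"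
    and L \<alpha> :: real and K :: "nat set" and S :: "nat \<Rightarrow> 'a set"
  assumes "prob_space M"
    and "X \<in> measurable M borel"
    and "Y \<in> borel_measurable M"
    and "\<forall>\<omega>\<in>space M. 0 \<le> Y \<omega> \<and> Y \<omega> \<le> 1"
    and "L > 0" and "\<alpha> \<ge> 0"
    and "\<forall>i\<in>K. \<forall>j\<in>K. i \<noteq> j \<longrightarrow> S i \<inter> S j = {}"
    and "(\<Union>k\<in>K. S k) = UNIV"
    and "\<forall>k\<in>K. \<forall>x\<in>S k. \<forall>x'\<in>S k. dist x x' \<le> 4 * \<alpha> / L"
    and "\<forall>k\<in>K. measure M (X -` S k \<inter> space M) > 0"
  shows "multicalibrated_partition M X Y (lip_class L) \<alpha> K S"
  unfolding multicalibrated_partition_def indistinguishable_def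
proof (intro conjI ballI)
  fix k and f :: "'a \<Rightarrow> real"
  assume k: "k \<in> K" and f: "f \<in> lip_class L"
  let ?A = "X -` S k \<inter> space M"
  have A_pos: "measure M ?A > 0"
    using assms(10) k by blast
  have "S k \<noteq> {}"
    using A_pos by auto
  moreover have "\<forall>x\<in>S k. \<forall>x'\<in>S k. dist x x' \<le> 4 * \<alpha> / L"
    using assms(9) k by blast
  ultimately obtain c where c: "\<forall>x\<in>S k. \<bar>f x - c\<bar> \<le> 4 * \<alpha> / 2"
    using lip_class_near_center[OF assms(5) f] by blast
  have "\<bar>cond_cov M ?A (\<lambda>\<omega>. f (X \<omega>)) Y\<bar> \<le> (4 * \<alpha> / 2) / 2"
  proof (rule abs_cond_cov_le_half_radius[OF _ A_pos _ assms(3)])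
    show "finite_measure M"
      using assms(1) by (rule prob_space.axioms(1))
    show "(\<lambda>\<omega>. f (X \<omega>)) \<in> borel_measurable M"
      using measurable_comp[OF assms(2) lip_class_borel_measurable[OF _ f]] assms(5)
      by (simp add: comp_def)
  qed (use c assms(4) in auto)
  then show "\<bar>cond_cov M ?A (\<lambda>\<omega>. f (X \<omega>)) Y\<bar> \<le> \<alpha>"
    by simp
qed (use assms in auto)

end
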